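(* Suppose $S$ is a complex-valued function of $z,p,b,T$ satisfying \[ \frac{S}{1+S}-zS=c+t, \] where $z=vi$ with $v\in\mathbb{R}^+$, $c=p/bT\in[0,1]$, and $t\in\mathbb{C}$ is also a function of $z,p,b,T$. Assume $S$ is continuous in $z$ and always has non-negative real part, and that $|t|\le\tau(p,b,T)/v$ where $\tau$ does not depend on $v$. If for some $v_0\ge2c$ \[ \frac{v_0+(1-c)}{\sqrt2}>\frac{\tau}{v_0}+2\sqrt{cv_0}+2\sqrt\tau, \] then for all $v\ge v_0$, \[ |\operatorname{Im}S|,\ |\operatorname{Re}S|\ \le\ |S|\ \le\ \sqrt{\frac2v\,|c+t|}. \]
   Context: Here $p,b,T$ are positive integers (fixed while $v$ varies). *)

theory Defs
  imports "HOL-Analysis.Analysis"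
begin

end

theory Submission
  imports Defs
begin

text \<open>Clearing denominators, the equation says that \<open>S\<close> solves the quadratic
\<open>S (S + A) = \<i> (c + t) / v\<close> with \<open>A = 1 + \<i> (1 - c - t) / v\<close>. Hence \<open>S\<close> or the
other root \<open>-A - S\<close> has modulus at most \<open>r = sqrt (\<bar>c + t\<bar> / v)\<close>. The hypothesis on
\<open>v\<^sub>0\<close> makes \<open>\<bar>A\<bar>\<close> more than twice an a priori bound \<open>\<rho> \<ge> r\<close>, so along \<open>v \<ge> v\<^sub>0\<close>
the continuous function \<open>\<bar>S\<bar> - L/2\<close> (with \<open>L \<le> \<bar>A\<bar>\<close>) is negative when \<open>S\<close> is the
small root and positive otherwise; it never vanishes. For large \<open>v\<close> the other root
has real part close to \<open>-1\<close>, which \<open>Re S \<ge> 0\<close> excludes, so \<open>S\<close> is the small root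
for all \<open>v \<ge> v\<^sub>0\<close>, giving even \<open>\<bar>S\<bar>\<^sup>2 \<le> \<bar>c + t\<bar> / v\<close>.\<close>

lemma self_consistent_eq_imp_quadratic:
  fixes S w :: complex and v :: real
  assumes "0 < v" and "0 \<le> Re S" and eqn: "S / (1 + S) - (\<i> * complex_of_real v) * S = w"
  shows "S * (S + (1 + \<i> * (1 - w) / complex_of_real v)) = \<i> * w / complex_of_real v"
proof -
  have "1 + S \<noteq> 0"
    using \<open>0 \<le> Re S\<close> by (auto simp: complex_eq_iff)
  with eqn have h: "S = w * (1 + S) + \<i> * v * S * (1 + S)"
    by (simp add: field_simps)
  have "\<i> * S = \<i> * w * (1 + S) + (\<i> * \<i>) * v * S * (1 + S)"
    by (subst h) (simp only: algebra_simps)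
  then show ?thesis
    using \<open>0 < v\<close> by (simp add: field_simps)
qed

lemma mult_eq_imp_norm_le_sqrt:
  fixes z a q :: "'a::real_normed_field"
  assumes "z * (z + a) = q"
  shows "norm z \<le> sqrt (norm q) \<or> norm (z + a) \<le> sqrt (norm q)"
proof (rule ccontr)
  assume "\<not> ?thesis"
  then have "sqrt (norm q) * sqrt (norm q) < norm z * norm (z + a)"
    by (intro mult_strict_mono) auto
  then show False
    using assms norm_mult[of z "z + a"] by simp
qed

lemma norm_Complex_add_ge:
  "(\<bar>x\<bar> + \<bar>y\<bar>) / sqrt 2 - cmod u \<le> cmod (Complex x y + u)"
proof -
  have "(\<bar>x\<bar> + \<bar>y\<bar>) / sqrt 2 \<le> cmod (Complex x y)"
    using complex_abs_le_norm[of "Complex x y"] by (simp add: divide_le_eq mult.commute)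
  moreover have "cmod (Complex x y) \<le> cmod (Complex x y + u) + cmod u"
    using norm_triangle_ineq4[of "Complex x y + u" u] by simp
  ultimately show ?thesis
    by linarith
qed

lemma two_sqrt_mult_increment_le:
  fixes c v0 v :: real
  assumes "0 \<le> c" "2 * c \<le> v0" "v0 \<le> v"
  shows "2 * sqrt (c * v) - 2 * sqrt (c * v0) \<le> (v - v0) / sqrt 2"
proof -
  have "sqrt 2 * sqrt c \<le> sqrt v0"
    using assms by (simp flip: real_sqrt_mult)
  moreover have "sqrt v0 \<le> sqrt v"
    using assms by simp
  ultimately have "2 * sqrt 2 * sqrt c \<le> sqrt v + sqrt v0"
    by linarith
  then have "2 * sqrt 2 * sqrt c * (sqrt v - sqrt v0)
      \<le> (sqrt v + sqrt v0) * (sqrt v - sqrt v0)"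
    by (intro mult_right_mono) (use assms in auto)
  also have "\<dots> = v - v0"
    using assms by (simp add: algebra_simps)
  finally show ?thesis
    by (simp add: real_sqrt_mult le_divide_eq algebra_simps)
qed

lemma sqrt_mult_add_div_less:
  fixes c \<tau> v :: real
  assumes "0 \<le> c" "0 \<le> \<tau>" "4 * (1 + \<tau> + c) \<le> v"
  shows "sqrt (c * v + \<tau>) / v < 1 - \<tau> / v\<^sup>2"
proof -
  have "1 \<le> v" and "\<tau> \<le> v / 4"
    using assms by auto
  have "c * v + \<tau> < v * (1 + \<tau> + c)"
    using \<open>1 \<le> v\<close> \<open>0 \<le> \<tau>\<close> mult_left_mono[OF \<open>1 \<le> v\<close> \<open>0 \<le> \<tau>\<close>] by (simp add: algebra_simps)
  also have "\<dots> \<le> (v / 2)\<^sup>2"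
    using assms \<open>1 \<le> v\<close> by (simp add: power2_eq_square mult_left_mono)
  finally have "sqrt (c * v + \<tau>) < v / 2"
    using real_sqrt_less_mono \<open>1 \<le> v\<close> by fastforce
  then have "sqrt (c * v + \<tau>) / v < 1 / 2"
    using \<open>1 \<le> v\<close> by (simp add: divide_less_eq)
  moreover have "\<tau> / v\<^sup>2 \<le> 1 / 2"
  proof -
    have "v \<le> v\<^sup>2"
      using mult_left_mono[of 1 v v] \<open>1 \<le> v\<close> by (simp add: power2_eq_square)
    then show ?thesis
      using \<open>1 \<le> v\<close> \<open>\<tau> \<le> v / 4\<close> by (simp add: divide_le_eq)
  qed
  ultimately show ?thesis
    by linarith
qed

lemma continuous_on_nonvanishing_neg:
  fixes f :: "real \<Rightarrow> real"
  assumes "a \<le> b" "continuous_on {a..b} f" "\<And>x. a \<le> x \<Longrightarrow> x \<le> b \<Longrightarrow> f x \<noteq> 0" "f b < 0"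
  shows "f a < 0"
proof (rule ccontr)
  assume "\<not> f a < 0"
  then obtain x where "a \<le> x" "x \<le> b" "f x = 0"
    using IVT2'[of f b 0 a] assms by force
  with assms(3) show False
    by blast
qed

locale self_consistent_resolvent =
  fixes c \<tau> v0 :: real and S t :: "real \<Rightarrow> complex"
  assumes c_nonneg: "0 \<le> c" and c_le_1: "c \<le> 1"
    and eqn: "\<And>v. 0 < v \<Longrightarrow>
      S v / (1 + S v) - (\<i> * complex_of_real v) * S v = complex_of_real c + t v"
    and cont: "continuous_on {0<..} S"
    and Re_nonneg: "\<And>v. 0 < v \<Longrightarrow> 0 \<le> Re (S v)"
    and t_bound: "\<And>v. 0 < v \<Longrightarrow> cmod (t v) \<le> \<tau> / v"
    and v0_pos: "0 < v0"
    and v0_ge: "2 * c \<le> v0"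
    and threshold: "\<tau> / v0 + 2 * sqrt (c * v0) + 2 * sqrt \<tau> < (v0 + (1 - c)) / sqrt 2"
begin

definition A :: "real \<Rightarrow> complex"
  where "A v = 1 + \<i> * (1 - (complex_of_real c + t v)) / complex_of_real v"

definition r :: "real \<Rightarrow> real"
  where "r v = sqrt (cmod (complex_of_real c + t v) / v)"

definition \<rho> :: "real \<Rightarrow> real"
  where "\<rho> v = sqrt (c * v + \<tau>) / v"

definition L :: "real \<Rightarrow> real"
  where "L v = ((v + (1 - c)) / sqrt 2 - \<tau> / v) / v"

lemma tau_nonneg: "0 \<le> \<tau>"
  using t_bound[of 1] norm_ge_zero[of "t 1"] by linarith

lemma quadratic: "0 < v \<Longrightarrow> S v * (S v + A v) = \<i> * (complex_of_real c + t v) / v"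
  unfolding A_def by (intro self_consistent_eq_imp_quadratic eqn Re_nonneg)

lemma small_or_other_root: "0 < v \<Longrightarrow> cmod (S v) \<le> r v \<or> cmod (S v + A v) \<le> r v"
  using mult_eq_imp_norm_le_sqrt[OF quadratic] by (simp add: r_def norm_divide norm_mult)

lemma r_le_\<rho>:
  assumes "0 < v"
  shows "r v \<le> \<rho> v"
proof -
  have "cmod (complex_of_real c + t v) \<le> c + \<tau> / v"
    using norm_triangle_ineq[of "complex_of_real c" "t v"] t_bound[OF assms] c_nonneg by simp
  then have "cmod (complex_of_real c + t v) / v \<le> (c * v + \<tau>) / v\<^sup>2"
    using assms by (simp add: divide_right_mono field_simps power2_eq_square)
  moreover have "\<rho> v = sqrt ((c * v + \<tau>) / v\<^sup>2)"
    using assms by (simp add: \<rho>_def real_sqrt_divide)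
  ultimately show ?thesis
    by (simp add: r_def)
qed

lemma L_le_norm_A:
  assumes "0 < v"
  shows "L v \<le> cmod (A v)"
proof -
  have "complex_of_real v * A v = Complex v (1 - c) + - (\<i> * t v)"
    using assms by (simp add: A_def field_simps complex_eq_iff)
  then have "v * cmod (A v) = cmod (Complex v (1 - c) + - (\<i> * t v))"
    using arg_cong[of _ _ cmod] assms by (metis abs_of_pos norm_mult norm_of_real)
  then have "(v + (1 - c)) / sqrt 2 - cmod (t v) \<le> v * cmod (A v)"
    using norm_Complex_add_ge[of v "1 - c" "- (\<i> * t v)"] assms c_le_1
    by (simp add: norm_mult)
  then have "(v + (1 - c)) / sqrt 2 - \<tau> / v \<le> v * cmod (A v)"
    using t_bound[OF assms] by linarith
  then show ?thesis
    using assms by (simp add: L_def divide_le_eq mult.commute)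
qed

lemma Re_A_ge:
  assumes "0 < v"
  shows "1 - \<tau> / v\<^sup>2 \<le> Re (A v)"
proof -
  have "- (\<tau> / v) \<le> Im (t v)"
    using abs_Im_le_cmod[of "t v"] t_bound[OF assms] by linarith
  then have "- (\<tau> / v) / v \<le> Im (t v) / v"
    using assms by (intro divide_right_mono) auto
  moreover have "Re (A v) = 1 + Im (t v) / v"
    using assms by (simp add: A_def Re_divide power2_eq_square)
  ultimately show ?thesis
    by (simp add: power2_eq_square)
qed

lemma two_\<rho>_less_L:
  assumes "v0 \<le> v"
  shows "2 * \<rho> v < L v"
proof -
  have "0 < v"
    using assms v0_pos by linarith
  have "2 * sqrt (c * v + \<tau>) \<le> 2 * sqrt (c * v) + 2 * sqrt \<tau>"
    using sqrt_add_le_add_sqrt[of "c * v" \<tau>] c_nonneg tau_nonneg \<open>0 < v\<close> by simp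
  also have "\<dots> \<le> 2 * sqrt (c * v0) + 2 * sqrt \<tau> + (v - v0) / sqrt 2"
    using two_sqrt_mult_increment_le[OF c_nonneg v0_ge assms] by linarith
  also have "\<dots> < (v + (1 - c)) / sqrt 2 - \<tau> / v0"
    using threshold by (simp add: diff_divide_distrib add_divide_distrib)
  also have "\<dots> \<le> (v + (1 - c)) / sqrt 2 - \<tau> / v"
    using tau_nonneg v0_pos assms by (simp add: frac_le)
  finally show ?thesis
    using \<open>0 < v\<close> by (simp add: L_def \<rho>_def divide_strict_right_mono)
qed

lemma small_root_norm_less: "v0 \<le> v \<Longrightarrow> cmod (S v) \<le> r v \<Longrightarrow> cmod (S v) < L v / 2"
  using r_le_\<rho>[of v] two_\<rho>_less_L[of v] v0_pos by linarith

lemma other_root_norm_greater: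
  assumes "v0 \<le> v" and other: "cmod (S v + A v) \<le> r v"
  shows "L v / 2 < cmod (S v)" and "1 - \<tau> / v\<^sup>2 \<le> \<rho> v"
proof -
  have "0 < v"
    using assms v0_pos by linarith
  have "cmod (A v) \<le> cmod (S v) + cmod (S v + A v)"
    using norm_triangle_ineq4[of "S v + A v" "S v"] by simp
  then show "L v / 2 < cmod (S v)"
    using other r_le_\<rho>[OF \<open>0 < v\<close>] L_le_norm_A[OF \<open>0 < v\<close>] two_\<rho>_less_L[OF assms(1)]
    by linarith
  have "Re (A v) \<le> Re (S v + A v)"
    using Re_nonneg[OF \<open>0 < v\<close>] by simp
  also have "\<dots> \<le> \<rho> v"
    using complex_Re_le_cmod[of "S v + A v"] other r_le_\<rho>[OF \<open>0 < v\<close>] by linarith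
  finally show "1 - \<tau> / v\<^sup>2 \<le> \<rho> v"
    using Re_A_ge[OF \<open>0 < v\<close>] by linarith
qed

lemma norm_S_ne_half_L: "v0 \<le> v \<Longrightarrow> cmod (S v) \<noteq> L v / 2"
  using small_or_other_root[of v] small_root_norm_less[of v] other_root_norm_greater(1)[of v] v0_pos
  by force

lemma small_root_eventually:
  assumes "v0 \<le> v" "4 * (1 + \<tau> + c) \<le> v"
  shows "cmod (S v) \<le> r v"
  using small_or_other_root[of v] other_root_norm_greater(2)[OF assms(1)]
    sqrt_mult_add_div_less[OF c_nonneg tau_nonneg assms(2)] assms v0_pos
  by (force simp: \<rho>_def)

lemma continuous_on_norm_S_minus_half_L:
  "continuous_on {0<..} (\<lambda>v. cmod (S v) - L v / 2)"
  unfolding L_def by (intro continuous_intros cont) auto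

lemma norm_S_less_half_L:
  assumes "v0 \<le> v"
  shows "cmod (S v) < L v / 2"
proof -
  define v1 where "v1 = max v (4 * (1 + \<tau> + c))"
  have "v \<le> v1" "v0 \<le> v1" "4 * (1 + \<tau> + c) \<le> v1"
    using assms by (auto simp: v1_def)
  have "cmod (S v) - L v / 2 < 0"
  proof (rule continuous_on_nonvanishing_neg[OF \<open>v \<le> v1\<close>])
    show "continuous_on {v..v1} (\<lambda>v. cmod (S v) - L v / 2)"
      by (rule continuous_on_subset[OF continuous_on_norm_S_minus_half_L])
        (use assms v0_pos in auto)
    show "cmod (S x) - L x / 2 \<noteq> 0" if "v \<le> x" "x \<le> v1" for x
      using norm_S_ne_half_L[of x] that assms by simp
    show "cmod (S v1) - L v1 / 2 < 0"
      using small_root_norm_less[OF \<open>v0 \<le> v1\<close> small_root_eventually] \<open>v0 \<le> v1\<close>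
        \<open>4 * (1 + \<tau> + c) \<le> v1\<close> by simp
  qed
  then show ?thesis
    by simp
qed

lemma norm_S_le_r: "v0 \<le> v \<Longrightarrow> cmod (S v) \<le> r v"
  using small_or_other_root[of v] other_root_norm_greater(1)[of v] norm_S_less_half_L[of v] v0_pos
  by force

end

theorem mainTheorem13:
  fixes p b T :: nat
    and S t :: "real \<Rightarrow> complex"
    and \<tau> v0 :: real
  assumes pos: "p > 0" "b > 0" "T > 0"
    and c_le1: "real p / (real b * real T) \<le> 1"
    and eqn: "\<And>v. v > 0 \<Longrightarrow>
      S v / (1 + S v) - (\<i> * complex_of_real v) * S v
        = complex_of_real (real p / (real b * real T)) + t v"
    and cont: "continuous_on {0<..} S"
    and re_nonneg: "\<And>v. v > 0 \<Longrightarrow> Re (S v) \<ge> 0"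
    and t_bound: "\<And>v. v > 0 \<Longrightarrow> cmod (t v) \<le> \<tau> / v"
    and v0_pos: "v0 > 0"
    and v0_ge: "v0 \<ge> 2 * (real p / (real b * real T))"
    and key: "(v0 + (1 - real p / (real b * real T))) / sqrt 2
      > \<tau> / v0 + 2 * sqrt ((real p / (real b * real T)) * v0) + 2 * sqrt \<tau>"
  shows "\<forall>v \<ge> v0.
      \<bar>Im (S v)\<bar> \<le> cmod (S v) \<and> \<bar>Re (S v)\<bar> \<le> cmod (S v) \<and>
      cmod (S v) \<le> sqrt (2 / v * cmod (complex_of_real (real p / (real b * real T)) + t v))"
proof -
  let ?c = "real p / (real b * real T)"
  interpret self_consistent_resolvent ?c \<tau> v0 S t
    by unfold_locales (use assms in auto)
  show ?thesis
  proof (intro allI impI conjI abs_Im_le_cmod abs_Re_le_cmod)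
    fix v
    assume "v0 \<le> v"
    then have "0 < v" "cmod (S v) \<le> r v"
      using v0_pos norm_S_le_r by auto
    moreover have "cmod (complex_of_real ?c + t v) / v \<le> 2 / v * cmod (complex_of_real ?c + t v)"
      using \<open>0 < v\<close> by (simp add: divide_right_mono field_simps)
    ultimately show "cmod (S v) \<le> sqrt (2 / v * cmod (complex_of_real ?c + t v))"
      unfolding r_def by (meson order_trans real_sqrt_le_mono)
  qed
qed

end
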